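(* Let $P_n$ be a polynomial over ${\cal A}_v$. If $v=2$, then ${\cal G}_l(P_n)$ and ${\cal G}_l(P_n,0)$ are associative; if $v=3$, they are alternative; in both cases $v=2$ and $v=3$ they have no divisors of zero.
   Context: ${\cal A}_v$ is the real Cayley-Dickson algebra of dimension $2^v$ (${\cal A}_2=\mathbb H$ quaternions, ${\cal A}_3$ octonions). A polynomial over ${\cal A}_v$ is $P_n(z)=\sum_{0\le|k|\le n}(a_k,z^k)$ with $(a_k,z^k)=\{a_{k_1}z^{k_1}\cdots a_{k_m}z^{k_m}\}_{q(2m)}$ a product of coefficients $a_{k_j}\in{\cal A}_v$ and powers of $z$ taken with a fixed prescribed bracketing. ${\cal A}_v^{\bullet}={\cal A}_v\setminus\{0\}$. ${\cal G}_l(P_n,0)$ is the set of $g\in{\cal A}_v^{\bullet}$ for which there exist zeros $z_0,z_1$ of $P_n$ with $gz_0=z_1$ and $g^{-1}z_1=z_0$; ${\cal G}_l(P_n):=\{g\in{\cal A}_v^{\bullet}: P_n(gz)=P_n(z)\ \forall z\in{\cal A}_v\}$, both considered with the multiplication of ${\cal A}_v$. *)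

theory Defs
  imports Complex_Main
begin

text \<open>Real Cayley-Dickson algebra A_v of dimension 2^v.
  Doubling convention: (a,b)(c,d) = (ac - conj(d) b, d a + b conj(c)),
  conj(a,b) = (conj a, -b); coordinates below 2^v form the first half,
  coordinates in [2^v, 2^(v+1)) the second half.\<close>

definition cd_carrier :: "nat \<Rightarrow> (nat \<Rightarrow> real) set" where
  "cd_carrier v = {x. \<forall>i. 2 ^ v \<le> i \<longrightarrow> x i = 0}"

definition cd_zero :: "nat \<Rightarrow> real" where
  "cd_zero = (\<lambda>i. 0)"

definition cd_nonzero :: "nat \<Rightarrow> (nat \<Rightarrow> real) set" where
  "cd_nonzero v = cd_carrier v - {cd_zero}"

definition cd_add :: "(nat \<Rightarrow> real) \<Rightarrow> (nat \<Rightarrow> real) \<Rightarrow> nat \<Rightarrow> real" where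
  "cd_add x y = (\<lambda>i. x i + y i)"

definition cd_sub :: "(nat \<Rightarrow> real) \<Rightarrow> (nat \<Rightarrow> real) \<Rightarrow> nat \<Rightarrow> real" where
  "cd_sub x y = (\<lambda>i. x i - y i)"

definition cd_scale :: "real \<Rightarrow> (nat \<Rightarrow> real) \<Rightarrow> nat \<Rightarrow> real" where
  "cd_scale r x = (\<lambda>i. r * x i)"

definition cd_lo :: "nat \<Rightarrow> (nat \<Rightarrow> real) \<Rightarrow> nat \<Rightarrow> real" where
  "cd_lo h x = (\<lambda>i. if i < h then x i else 0)"

definition cd_hi :: "nat \<Rightarrow> (nat \<Rightarrow> real) \<Rightarrow> nat \<Rightarrow> real" where
  "cd_hi h x = (\<lambda>i. if i < h then x (i + h) else 0)"

definition cd_pair :: "nat \<Rightarrow> (nat \<Rightarrow> real) \<Rightarrow> (nat \<Rightarrow> real) \<Rightarrow> nat \<Rightarrow> real" where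
  "cd_pair h p q = (\<lambda>i. if i < h then p i else if i < 2 * h then q (i - h) else 0)"

primrec cd_conj :: "nat \<Rightarrow> (nat \<Rightarrow> real) \<Rightarrow> nat \<Rightarrow> real" where
  "cd_conj 0 x = (\<lambda>i. if i = 0 then x 0 else 0)"
| "cd_conj (Suc v) x =
     cd_pair (2 ^ v) (cd_conj v (cd_lo (2 ^ v) x)) (cd_scale (-1) (cd_hi (2 ^ v) x))"

primrec cd_mult :: "nat \<Rightarrow> (nat \<Rightarrow> real) \<Rightarrow> (nat \<Rightarrow> real) \<Rightarrow> nat \<Rightarrow> real" where
  "cd_mult 0 x y = (\<lambda>i. if i = 0 then x 0 * y 0 else 0)"
| "cd_mult (Suc v) x y =
     (let h = 2 ^ v; a = cd_lo h x; b = cd_hi h x; c = cd_lo h y; d = cd_hi h y in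
      cd_pair h (cd_sub (cd_mult v a c) (cd_mult v (cd_conj v d) b))
                (cd_add (cd_mult v d a) (cd_mult v b (cd_conj v c))))"

definition cd_normsq :: "nat \<Rightarrow> (nat \<Rightarrow> real) \<Rightarrow> real" where
  "cd_normsq v x = (\<Sum>i<2 ^ v. (x i)\<^sup>2)"

definition cd_inv :: "nat \<Rightarrow> (nat \<Rightarrow> real) \<Rightarrow> nat \<Rightarrow> real" where
  "cd_inv v x = cd_scale (1 / cd_normsq v x) (cd_conj v x)"

text \<open>Monomials: products of coefficients and the variable z with a fixed bracketing
  (an expression tree); a polynomial is a finite sum of monomials.\<close>

datatype cd_mono = Coef "nat \<Rightarrow> real" | Var | Mul cd_mono cd_mono

primrec mono_coeffs :: "cd_mono \<Rightarrow> (nat \<Rightarrow> real) set" where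
  "mono_coeffs (Coef a) = {a}"
| "mono_coeffs Var = {}"
| "mono_coeffs (Mul m1 m2) = mono_coeffs m1 \<union> mono_coeffs m2"

primrec mono_eval :: "nat \<Rightarrow> cd_mono \<Rightarrow> (nat \<Rightarrow> real) \<Rightarrow> nat \<Rightarrow> real" where
  "mono_eval v (Coef a) z = a"
| "mono_eval v Var z = z"
| "mono_eval v (Mul m1 m2) z = cd_mult v (mono_eval v m1 z) (mono_eval v m2 z)"

type_synonym cd_poly = "cd_mono list"

definition is_cd_poly :: "nat \<Rightarrow> cd_poly \<Rightarrow> bool" where
  "is_cd_poly v P \<longleftrightarrow> (\<forall>m \<in> set P. mono_coeffs m \<subseteq> cd_carrier v)"

definition poly_eval :: "nat \<Rightarrow> cd_poly \<Rightarrow> (nat \<Rightarrow> real) \<Rightarrow> nat \<Rightarrow> real" where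
  "poly_eval v P z = foldr (\<lambda>m acc. cd_add (mono_eval v m z) acc) P cd_zero"

definition G_l0 :: "nat \<Rightarrow> cd_poly \<Rightarrow> (nat \<Rightarrow> real) set" where
  "G_l0 v P = {g \<in> cd_nonzero v. \<exists>z0 \<in> cd_carrier v. \<exists>z1 \<in> cd_carrier v.
      poly_eval v P z0 = cd_zero \<and> poly_eval v P z1 = cd_zero \<and>
      cd_mult v g z0 = z1 \<and> cd_mult v (cd_inv v g) z1 = z0}"

definition G_l :: "nat \<Rightarrow> cd_poly \<Rightarrow> (nat \<Rightarrow> real) set" where
  "G_l v P = {g \<in> cd_nonzero v. \<forall>z \<in> cd_carrier v.
      poly_eval v P (cd_mult v g z) = poly_eval v P z}"

definition cd_associative_on :: "nat \<Rightarrow> (nat \<Rightarrow> real) set \<Rightarrow> bool" where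
  "cd_associative_on v S \<longleftrightarrow> (\<forall>a\<in>S. \<forall>b\<in>S. \<forall>c\<in>S.
      cd_mult v (cd_mult v a b) c = cd_mult v a (cd_mult v b c))"

definition cd_alternative_on :: "nat \<Rightarrow> (nat \<Rightarrow> real) set \<Rightarrow> bool" where
  "cd_alternative_on v S \<longleftrightarrow> (\<forall>a\<in>S. \<forall>b\<in>S.
      cd_mult v (cd_mult v a a) b = cd_mult v a (cd_mult v a b) \<and>
      cd_mult v (cd_mult v a b) b = cd_mult v a (cd_mult v b b))"

definition cd_no_zero_divisors_on :: "nat \<Rightarrow> (nat \<Rightarrow> real) set \<Rightarrow> bool" where
  "cd_no_zero_divisors_on v S \<longleftrightarrow> (\<forall>a\<in>S. \<forall>b\<in>S. cd_mult v a b \<noteq> cd_zero)"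

end

theory Submission
  imports Defs
begin

text \<open>For \<open>v = 2\<close> (quaternions) and \<open>v = 3\<close> (octonions) the product is an explicit
  bilinear multiplication table, so associativity for \<open>v = 2\<close>, alternativity for \<open>v = 3\<close> and
  the multiplicativity of the squared norm (Euler's four-square and Degen's eight-square
  identities) are polynomial identities in the coordinates.  Multiplicativity of the norm
  excludes zero divisors among nonzero elements.  All three properties therefore hold on every
  set of nonzero elements; \<open>G\<^sub>l(P)\<close> and \<open>G\<^sub>l(P,0)\<close> are such sets, and the polynomial
  \<open>P\<close> plays no further role.\<close>

lemmas cd_mult_unfold = cd_pair_def cd_lo_def cd_hi_def cd_sub_def cd_add_def cd_scale_def Let_def

lemma cd_mult_in_carrier: "cd_mult v x y \<in> cd_carrier v"
  by (cases v) (auto simp: cd_carrier_def cd_pair_def Let_def)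

lemma cd_carrier_eqI:
  assumes "x \<in> cd_carrier v" "y \<in> cd_carrier v" "\<And>i. i < 2 ^ v \<Longrightarrow> x i = y i"
  shows "x = y"
proof
  fix i
  show "x i = y i"
    using assms by (cases "i < 2 ^ v") (auto simp: cd_carrier_def)
qed

lemma quaternion_mult_coords:
  "cd_mult 2 x y 0 = x 0 * y 0 - x 1 * y 1 - x 2 * y 2 - x 3 * y 3"
  "cd_mult 2 x y 1 = x 0 * y 1 + x 1 * y 0 + x 2 * y 3 - x 3 * y 2"
  "cd_mult 2 x y 2 = x 0 * y 2 - x 1 * y 3 + x 2 * y 0 + x 3 * y 1"
  "cd_mult 2 x y 3 = x 0 * y 3 + x 1 * y 2 - x 2 * y 1 + x 3 * y 0"
  by (simp_all add: cd_mult_unfold numeral_eq_Suc)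

lemma octonion_mult_coords:
  "cd_mult 3 x y 0 = x 0 * y 0 - x 1 * y 1 - x 2 * y 2 - x 3 * y 3
                   - x 4 * y 4 - x 5 * y 5 - x 6 * y 6 - x 7 * y 7"
  "cd_mult 3 x y 1 = x 0 * y 1 + x 1 * y 0 + x 2 * y 3 - x 3 * y 2
                   + x 4 * y 5 - x 5 * y 4 - x 6 * y 7 + x 7 * y 6"
  "cd_mult 3 x y 2 = x 0 * y 2 - x 1 * y 3 + x 2 * y 0 + x 3 * y 1
                   + x 4 * y 6 + x 5 * y 7 - x 6 * y 4 - x 7 * y 5"
  "cd_mult 3 x y 3 = x 0 * y 3 + x 1 * y 2 - x 2 * y 1 + x 3 * y 0
                   + x 4 * y 7 - x 5 * y 6 + x 6 * y 5 - x 7 * y 4"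
  "cd_mult 3 x y 4 = x 0 * y 4 - x 1 * y 5 - x 2 * y 6 - x 3 * y 7
                   + x 4 * y 0 + x 5 * y 1 + x 6 * y 2 + x 7 * y 3"
  "cd_mult 3 x y 5 = x 0 * y 5 + x 1 * y 4 - x 2 * y 7 + x 3 * y 6
                   - x 4 * y 1 + x 5 * y 0 - x 6 * y 3 + x 7 * y 2"
  "cd_mult 3 x y 6 = x 0 * y 6 + x 1 * y 7 + x 2 * y 4 - x 3 * y 5
                   - x 4 * y 2 + x 5 * y 3 + x 6 * y 0 - x 7 * y 1"
  "cd_mult 3 x y 7 = x 0 * y 7 - x 1 * y 6 + x 2 * y 5 + x 3 * y 4
                   - x 4 * y 3 - x 5 * y 2 + x 6 * y 1 + x 7 * y 0"
  by (simp_all add: cd_mult_unfold numeral_eq_Suc)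

lemma quaternion_normsq: "cd_normsq 2 x = (x 0)\<^sup>2 + (x 1)\<^sup>2 + (x 2)\<^sup>2 + (x 3)\<^sup>2"
  by (simp add: cd_normsq_def lessThan_nat_numeral)

lemma octonion_normsq:
  "cd_normsq 3 x = (x 0)\<^sup>2 + (x 1)\<^sup>2 + (x 2)\<^sup>2 + (x 3)\<^sup>2 + (x 4)\<^sup>2 + (x 5)\<^sup>2 + (x 6)\<^sup>2 + (x 7)\<^sup>2"
  by (simp add: cd_normsq_def lessThan_nat_numeral)

lemma quaternion_eqI:
  assumes "x \<in> cd_carrier 2" "y \<in> cd_carrier 2"
    and "x 0 = y 0" "x 1 = y 1" "x 2 = y 2" "x 3 = y 3"
  shows "x = y"
proof (rule cd_carrier_eqI[OF assms(1,2)])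
  fix i :: nat
  assume "i < 2 ^ 2"
  then have "i \<in> {0, 1, 2, 3}" by auto
  then show "x i = y i" using assms(3-) by (elim insertE emptyE) simp_all
qed

lemma octonion_eqI:
  assumes "x \<in> cd_carrier 3" "y \<in> cd_carrier 3"
    and "x 0 = y 0" "x 1 = y 1" "x 2 = y 2" "x 3 = y 3"
        "x 4 = y 4" "x 5 = y 5" "x 6 = y 6" "x 7 = y 7"
  shows "x = y"
proof (rule cd_carrier_eqI[OF assms(1,2)])
  fix i :: nat
  assume "i < 2 ^ 3"
  then have "i \<in> {0, 1, 2, 3, 4, 5, 6, 7}" by auto
  then show "x i = y i" using assms(3-) by (elim insertE emptyE) simp_all
qed

lemma quaternion_mult_assoc: "cd_mult 2 (cd_mult 2 a b) c = cd_mult 2 a (cd_mult 2 b c)"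
  by (rule quaternion_eqI[OF cd_mult_in_carrier cd_mult_in_carrier];
      simp only: quaternion_mult_coords; algebra)

lemma octonion_mult_alternative_left: "cd_mult 3 (cd_mult 3 a a) b = cd_mult 3 a (cd_mult 3 a b)"
  by (rule octonion_eqI[OF cd_mult_in_carrier cd_mult_in_carrier];
      simp only: octonion_mult_coords; algebra)

lemma octonion_mult_alternative_right: "cd_mult 3 (cd_mult 3 a b) b = cd_mult 3 a (cd_mult 3 b b)"
  by (rule octonion_eqI[OF cd_mult_in_carrier cd_mult_in_carrier];
      simp only: octonion_mult_coords; algebra)

lemma quaternion_normsq_mult: "cd_normsq 2 (cd_mult 2 a b) = cd_normsq 2 a * cd_normsq 2 b"
  unfolding quaternion_normsq quaternion_mult_coords by algebra

lemma octonion_normsq_mult: "cd_normsq 3 (cd_mult 3 a b) = cd_normsq 3 a * cd_normsq 3 b"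
  unfolding octonion_normsq octonion_mult_coords by algebra

lemma cd_normsq_pos:
  assumes "x \<in> cd_nonzero v"
  shows "0 < cd_normsq v x"
proof -
  from assms obtain i where "x i \<noteq> 0"
    by (auto simp: cd_nonzero_def cd_zero_def)
  moreover from assms this have "i < 2 ^ v"
    by (auto simp: cd_nonzero_def cd_carrier_def not_less[symmetric])
  ultimately show ?thesis
    unfolding cd_normsq_def by (intro sum_pos2[of _ i]) auto
qed

lemma cd_mult_nonzero_if_normsq_mult:
  assumes normsq_mult: "cd_normsq v (cd_mult v x y) = cd_normsq v x * cd_normsq v y"
    and "x \<in> cd_nonzero v" "y \<in> cd_nonzero v"
  shows "cd_mult v x y \<noteq> cd_zero"
proof
  assume "cd_mult v x y = cd_zero"
  then have "cd_normsq v x * cd_normsq v y = cd_normsq v cd_zero"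
    by (simp only: normsq_mult[symmetric])
  also have "\<dots> = 0"
    by (simp add: cd_normsq_def cd_zero_def)
  finally show False
    using cd_normsq_pos[OF \<open>x \<in> cd_nonzero v\<close>] cd_normsq_pos[OF \<open>y \<in> cd_nonzero v\<close>]
    by simp
qed

lemma cd_associative_on_quaternions: "cd_associative_on 2 S"
  by (simp add: cd_associative_on_def quaternion_mult_assoc)

lemma cd_alternative_on_octonions: "cd_alternative_on 3 S"
  by (simp add: cd_alternative_on_def octonion_mult_alternative_left
      octonion_mult_alternative_right)

lemma cd_no_zero_divisors_on_nonzero:
  assumes "v = 2 \<or> v = 3" "S \<subseteq> cd_nonzero v"
  shows "cd_no_zero_divisors_on v S"
proof -
  have normsq_mult: "cd_normsq v (cd_mult v x y) = cd_normsq v x * cd_normsq v y" for x y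
    using assms(1) quaternion_normsq_mult octonion_normsq_mult by auto
  show ?thesis
    unfolding cd_no_zero_divisors_on_def
    using assms(2) cd_mult_nonzero_if_normsq_mult[OF normsq_mult] by blast
qed

lemma G_l_subset_nonzero: "G_l v P \<subseteq> cd_nonzero v"
  by (auto simp: G_l_def)

lemma G_l0_subset_nonzero: "G_l0 v P \<subseteq> cd_nonzero v"
  by (auto simp: G_l0_def)

theorem corollary6:
  fixes v :: nat and P :: cd_poly
  assumes "is_cd_poly v P"
  shows "(v = 2 \<longrightarrow> cd_associative_on v (G_l v P) \<and> cd_associative_on v (G_l0 v P))
       \<and> (v = 3 \<longrightarrow> cd_alternative_on v (G_l v P) \<and> cd_alternative_on v (G_l0 v P))
       \<and> (v = 2 \<or> v = 3 \<longrightarrow> cd_no_zero_divisors_on v (G_l v P)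
                            \<and> cd_no_zero_divisors_on v (G_l0 v P))"
proof (intro conjI impI)
  assume "v = 2"
  then show "cd_associative_on v (G_l v P)" "cd_associative_on v (G_l0 v P)"
    using cd_associative_on_quaternions by auto
next
  assume "v = 3"
  then show "cd_alternative_on v (G_l v P)" "cd_alternative_on v (G_l0 v P)"
    using cd_alternative_on_octonions by auto
next
  assume "v = 2 \<or> v = 3"
  then show "cd_no_zero_divisors_on v (G_l v P)" "cd_no_zero_divisors_on v (G_l0 v P)"
    using cd_no_zero_divisors_on_nonzero G_l_subset_nonzero G_l0_subset_nonzero by auto
qed

end
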